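(* Let $f_0\in\mathbb{R}$, $g\in\mathbb{R}^n$, $H$ a symmetric $n\times n$ matrix, $\sigma>0$, and $m(s)=f_0+\langle g,s\rangle+\frac12\langle Hs,s\rangle+\frac16\sigma\|s\|^3$. Let $s_k\in\mathbb{R}^n$ with $m(s_k)\le m(0)$, set $g_k=g+Hs_k$, and assume $\|g_k\|_{r,1}\ge\frac12\sigma\|s_k\|^2$. Let $d_k$ be a minimizer of $\langle g_k,v\rangle$ over $\{v:\|v\|=1\}$, let $\alpha_k^C$ be a minimizer of $\alpha\mapsto m(s_k+\alpha d_k)$ over $\alpha\ge0$, and $s_k^C=s_k+\alpha_k^Cd_k$. Then $$m(s_k)-m(s_k^C)\ge\frac12\min\left[\frac{\big|\|g_k\|_{r,1}-\frac12\sigma\|s_k\|^2\big|^2}{1+\frac32(\|H\|_{r,2}+\sigma\|s_k\|)},\ \frac{\big|\|g_k\|_{r,1}-\frac12\sigma\|s_k\|^2\big|^{3/2}}{3\sqrt\sigma}\right].$$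
   Context: $\|\cdot\|$ is an arbitrary (possibly non-smooth) norm on $\mathbb{R}^n$, $\langle\cdot,\cdot\rangle$ the Euclidean inner product, $\|v\|_{r,1}=\max_{\|s\|=1}|\langle v,s\rangle|$ the dual norm, and for a symmetric matrix $H$, $\|H\|_{r,2}=\max_{\|v\|=1}|\langle Hv,v\rangle|$. *)

theory Defs
  imports "HOL-Analysis.Analysis"
begin

definition is_norm :: "(real^'n \<Rightarrow> real) \<Rightarrow> bool" where
  "is_norm N \<longleftrightarrow>
     (\<forall>x. 0 \<le> N x) \<and> (\<forall>x. N x = 0 \<longleftrightarrow> x = 0) \<and>
     (\<forall>c x. N (c *\<^sub>R x) = \<bar>c\<bar> * N x) \<and>
     (\<forall>x y. N (x + y) \<le> N x + N y)"

definition dual_norm :: "(real^'n \<Rightarrow> real) \<Rightarrow> real^'n \<Rightarrow> real" where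
  "dual_norm N v = Sup {\<bar>v \<bullet> s\<bar> | s. N s = 1}"

definition mat_norm2 :: "(real^'n \<Rightarrow> real) \<Rightarrow> real^'n^'n \<Rightarrow> real" where
  "mat_norm2 N H = Sup {\<bar>(H *v v) \<bullet> v\<bar> | v. N v = 1}"

definition cubic_model ::
  "(real^'n \<Rightarrow> real) \<Rightarrow> real \<Rightarrow> real^'n \<Rightarrow> real^'n^'n \<Rightarrow> real \<Rightarrow> real^'n \<Rightarrow> real" where
  "cubic_model N f0 g H \<sigma> s = f0 + g \<bullet> s + (1/2) * ((H *v s) \<bullet> s) + (1/6) * \<sigma> * (N s) ^ 3"

end

theory Submission
  imports Defs
begin

text \<open>Write \<open>\<delta>\<close> for the dual norm of \<open>g\<^sub>k\<close> minus \<open>\<sigma> \<parallel>s\<^sub>k\<parallel>\<^sup>2 / 2\<close> and \<open>K\<close> for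
  \<open>\<parallel>H\<parallel> + \<sigma> \<parallel>s\<^sub>k\<parallel>\<close>. Along the steepest-descent direction \<open>d\<^sub>k\<close> the model has slope
  minus the dual norm of \<open>g\<^sub>k\<close> and curvature at most \<open>\<parallel>H\<parallel>\<close>, while the triangle inequality
  \<open>\<parallel>s\<^sub>k + \<alpha> d\<^sub>k\<parallel> \<le> \<parallel>s\<^sub>k\<parallel> + \<alpha>\<close> controls the cubic term. Expanding \<open>(\<parallel>s\<^sub>k\<parallel> + \<alpha>)\<^sup>3\<close> shows that
  for every \<open>\<alpha> \<ge> 0\<close> the decrease \<open>m(s\<^sub>k) - m(s\<^sub>k + \<alpha> d\<^sub>k)\<close> is at least
  \<open>\<alpha>\<delta> - \<alpha>\<^sup>2 K / 2 - \<sigma> \<alpha>\<^sup>3 / 6\<close>. At \<open>\<alpha> = min (\<delta> / (1 + 3K/2)) (sqrt (\<delta> / \<sigma>))\<close> this cubic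
  is at least \<open>\<alpha>\<delta> / 2\<close>, and the optimal step \<open>\<alpha>\<^sub>k\<^sup>C\<close> decreases the model at least as much.
  For an arbitrary norm the supremum defining \<open>\<parallel>H\<parallel>\<close> is finite only because the unit sphere is
  bounded, which follows from equivalence with the Euclidean norm.\<close>

lemma is_norm_nonneg: "is_norm N \<Longrightarrow> 0 \<le> N x"
  unfolding is_norm_def by blast

lemma is_norm_eq_0_iff: "is_norm N \<Longrightarrow> N x = 0 \<longleftrightarrow> x = 0"
  unfolding is_norm_def by blast

lemma is_norm_zero: "is_norm N \<Longrightarrow> N 0 = 0"
  by (simp add: is_norm_eq_0_iff)

lemma is_norm_scaleR: "is_norm N \<Longrightarrow> N (c *\<^sub>R x) = \<bar>c\<bar> * N x"
  unfolding is_norm_def by blast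

lemma is_norm_triangle: "is_norm N \<Longrightarrow> N (x + y) \<le> N x + N y"
  unfolding is_norm_def by blast

lemma is_norm_minus: "is_norm N \<Longrightarrow> N (- x) = N x"
  using is_norm_scaleR[of N "-1" x] by simp

lemma is_norm_reverse_triangle: "is_norm N \<Longrightarrow> \<bar>N x - N y\<bar> \<le> N (x - y)"
  using is_norm_triangle[of N "x - y" y] is_norm_triangle[of N "y - x" x]
    is_norm_minus[of N "x - y"] by simp

lemma is_norm_sum_le:
  assumes "is_norm N" "finite S"
  shows "N (sum f S) \<le> (\<Sum>i\<in>S. N (f i))"
  using assms(2)
proof (induction S rule: finite_induct)
  case empty
  then show ?case using is_norm_zero[OF assms(1)] by simp
next
  case (insert x F)
  have "N (f x + sum f F) \<le> N (f x) + N (sum f F)"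
    by (rule is_norm_triangle[OF assms(1)])
  then show ?case using insert by simp
qed

lemma is_norm_le_norm:
  fixes N :: "real^'n \<Rightarrow> real"
  assumes "is_norm N"
  obtains C where "C \<ge> 0" "\<And>x. N x \<le> C * norm x"
proof
  show "(\<Sum>b\<in>Basis. N b) \<ge> 0" by (simp add: is_norm_nonneg[OF assms] sum_nonneg)
  fix x :: "real^'n"
  have "N x = N (\<Sum>b\<in>Basis. (x \<bullet> b) *\<^sub>R b)" by (simp add: euclidean_representation)
  also have "\<dots> \<le> (\<Sum>b\<in>Basis. N ((x \<bullet> b) *\<^sub>R b))" by (rule is_norm_sum_le[OF assms]) simp
  also have "\<dots> = (\<Sum>b\<in>Basis. \<bar>x \<bullet> b\<bar> * N b)" by (simp add: is_norm_scaleR[OF assms])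
  also have "\<dots> \<le> (\<Sum>b\<in>Basis. norm x * N b)"
    by (rule sum_mono) (simp add: Basis_le_norm mult_right_mono is_norm_nonneg[OF assms])
  finally show "N x \<le> (\<Sum>b\<in>Basis. N b) * norm x" by (simp add: sum_distrib_left mult.commute)
qed

lemma is_norm_lipschitz:
  fixes N :: "real^'n \<Rightarrow> real"
  assumes "is_norm N"
  obtains C where "C-lipschitz_on UNIV N"
proof -
  obtain C where "C \<ge> 0" "\<And>x. N x \<le> C * norm x" using is_norm_le_norm[OF assms] by blast
  then have "C-lipschitz_on UNIV N"
    using is_norm_reverse_triangle[OF assms]
    by (intro lipschitz_onI) (auto simp: dist_norm dist_real_def intro: order_trans)
  then show thesis ..
qed

lemma is_norm_ge_norm:
  fixes N :: "real^'n \<Rightarrow> real"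
  assumes "is_norm N"
  obtains c where "c > 0" "\<And>x. c * norm x \<le> N x"
proof -
  obtain C where "C-lipschitz_on UNIV N" using is_norm_lipschitz[OF assms] by blast
  then have "continuous_on (sphere 0 1) N"
    by (meson lipschitz_on_continuous_on lipschitz_on_subset subset_UNIV)
  moreover have "sphere (0::real^'n) 1 \<noteq> {}"
    using norm_axis_1[of "undefined::'n"] by (metis mem_sphere_0 empty_iff)
  ultimately obtain x0 where x0: "x0 \<in> sphere 0 1"
    and min: "\<And>y. y \<in> sphere 0 1 \<Longrightarrow> N x0 \<le> N y"
    using continuous_attains_inf[OF compact_sphere] by blast
  have "N x0 > 0"
    using x0 is_norm_nonneg[OF assms, of x0] is_norm_eq_0_iff[OF assms, of x0] by force
  moreover have "N x0 * norm x \<le> N x" for x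
  proof (cases "x = 0")
    case True
    then show ?thesis using is_norm_zero[OF assms] by simp
  next
    case False
    then have "N x0 \<le> N ((1 / norm x) *\<^sub>R x)" by (intro min) simp
    also have "\<dots> = N x / norm x" by (simp add: is_norm_scaleR[OF assms])
    finally show ?thesis using False by (simp add: field_simps)
  qed
  ultimately show thesis by (rule that)
qed

lemma abs_quadratic_form_le_mat_norm2:
  fixes N :: "real^'n \<Rightarrow> real"
  assumes "is_norm N" "N v = 1"
  shows "\<bar>(H *v v) \<bullet> v\<bar> \<le> mat_norm2 N H"
proof -
  obtain c where c: "c > 0" "\<And>x. c * norm x \<le> N x" using is_norm_ge_norm[OF assms(1)] by blast
  obtain B where "B > 0" and B: "\<And>x. norm (H *v x) \<le> norm x * B"
    using bounded_linear.pos_bounded[OF matrix_vector_mul_bounded_linear[of H]] by blast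
  have "\<bar>(H *v u) \<bullet> u\<bar> \<le> B / c\<^sup>2" if "N u = 1" for u
  proof -
    have "norm u \<le> 1 / c" using c(1) c(2)[of u] that by (simp add: field_simps)
    have "\<bar>(H *v u) \<bullet> u\<bar> \<le> norm (H *v u) * norm u" by (rule Cauchy_Schwarz_ineq2)
    also have "\<dots> \<le> norm u * B * norm u" using B[of u] by (rule mult_right_mono) simp
    also have "\<dots> = B * (norm u)\<^sup>2" by (simp add: power2_eq_square)
    also have "\<dots> \<le> B * (1 / c)\<^sup>2"
      using \<open>B > 0\<close> \<open>norm u \<le> 1 / c\<close> by (intro mult_left_mono power_mono) auto
    finally show ?thesis by (simp add: power_divide)
  qed
  then have "bdd_above {\<bar>(H *v u) \<bullet> u\<bar> | u. N u = 1}" by (intro bdd_aboveI) blast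
  then show ?thesis unfolding mat_norm2_def using assms(2) by (intro cSup_upper) blast+
qed

lemma dual_norm_eq_minimizer:
  assumes "is_norm N" "N d = 1" and min: "\<And>v. N v = 1 \<Longrightarrow> w \<bullet> d \<le> w \<bullet> v"
  shows "dual_norm N w = - (w \<bullet> d)"
  unfolding dual_norm_def
proof (rule cSup_eq_maximum)
  have "w \<bullet> d \<le> 0" using min[of "- d"] is_norm_minus[OF assms(1)] assms(2) by simp
  then show "- (w \<bullet> d) \<in> {\<bar>w \<bullet> s\<bar> | s. N s = 1}" using assms(2) by force
next
  fix x assume "x \<in> {\<bar>w \<bullet> s\<bar> | s. N s = 1}"
  then obtain s where "x = \<bar>w \<bullet> s\<bar>" "N s = 1" by blast
  then show "x \<le> - (w \<bullet> d)" using min[of s] min[of "- s"] is_norm_minus[OF assms(1)] by auto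
qed

lemma symmetric_matrix_inner_commute:
  fixes H :: "real^'n^'n"
  assumes "transpose H = H"
  shows "(H *v x) \<bullet> y = (H *v y) \<bullet> x"
  by (metis assms dot_lmul_matrix inner_commute vector_transpose_matrix)

lemma cubic_model_along_line:
  assumes "transpose H = H"
  shows "cubic_model N c g H \<sigma> (s + \<alpha> *\<^sub>R d) = cubic_model N c g H \<sigma> s
    + \<alpha> * ((g + H *v s) \<bullet> d) + \<alpha>\<^sup>2 / 2 * ((H *v d) \<bullet> d)
    + \<sigma> / 6 * (N (s + \<alpha> *\<^sub>R d) ^ 3 - N s ^ 3)"
proof -
  have "(H *v (s + \<alpha> *\<^sub>R d)) \<bullet> (s + \<alpha> *\<^sub>R d)
      = (H *v s) \<bullet> s + 2 * \<alpha> * ((H *v s) \<bullet> d) + \<alpha>\<^sup>2 * ((H *v d) \<bullet> d)"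
    using symmetric_matrix_inner_commute[OF assms, of d s]
    by (simp add: matrix_vector_right_distrib matrix_vector_mult_scaleR inner_add_left
        inner_add_right algebra_simps power2_eq_square)
  then show ?thesis
    unfolding cubic_model_def by (simp add: inner_add_left inner_add_right algebra_simps)
qed

lemma cubic_model_decrease_ge:
  fixes N :: "real^'n \<Rightarrow> real"
  assumes norm: "is_norm N" and sym: "transpose H = H" and "\<sigma> \<ge> 0"
    and "N d = 1" and "\<alpha> \<ge> 0"
  shows "cubic_model N c g H \<sigma> s - cubic_model N c g H \<sigma> (s + \<alpha> *\<^sub>R d)
    \<ge> \<alpha> * (- ((g + H *v s) \<bullet> d) - \<sigma> / 2 * N s ^ 2)
      - \<alpha>\<^sup>2 / 2 * (mat_norm2 N H + \<sigma> * N s) - \<sigma> * \<alpha> ^ 3 / 6"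
proof -
  have "N (s + \<alpha> *\<^sub>R d) \<le> N s + \<alpha>"
    using is_norm_triangle[OF norm, of s "\<alpha> *\<^sub>R d"] is_norm_scaleR[OF norm, of \<alpha> d]
      \<open>N d = 1\<close> \<open>\<alpha> \<ge> 0\<close> by simp
  then have "N (s + \<alpha> *\<^sub>R d) ^ 3 \<le> (N s + \<alpha>) ^ 3"
    using is_norm_nonneg[OF norm] by (intro power_mono) auto
  then have "\<sigma> / 6 * (N (s + \<alpha> *\<^sub>R d) ^ 3 - N s ^ 3) \<le> \<sigma> / 6 * ((N s + \<alpha>) ^ 3 - N s ^ 3)"
    using \<open>\<sigma> \<ge> 0\<close> by (intro mult_left_mono) auto
  also have "\<dots> = \<alpha> * (\<sigma> / 2 * N s ^ 2) + \<alpha>\<^sup>2 / 2 * (\<sigma> * N s) + \<sigma> * \<alpha> ^ 3 / 6"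
    by (simp add: power2_eq_square power3_eq_cube algebra_simps)
  finally have cube: "\<sigma> / 6 * (N (s + \<alpha> *\<^sub>R d) ^ 3 - N s ^ 3)
      \<le> \<alpha> * (\<sigma> / 2 * N s ^ 2) + \<alpha>\<^sup>2 / 2 * (\<sigma> * N s) + \<sigma> * \<alpha> ^ 3 / 6" .
  have "(H *v d) \<bullet> d \<le> mat_norm2 N H"
    using abs_quadratic_form_le_mat_norm2[OF norm \<open>N d = 1\<close>, of H] by linarith
  then have curv: "\<alpha>\<^sup>2 / 2 * ((H *v d) \<bullet> d) \<le> \<alpha>\<^sup>2 / 2 * mat_norm2 N H"
    by (intro mult_left_mono) auto
  show ?thesis
    using cubic_model_along_line[OF sym, of N c g \<sigma> s \<alpha> d] cube curv
    unfolding right_diff_distrib distrib_left by linarith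
qed

lemma powr_three_halves: "0 \<le> x \<Longrightarrow> x powr (3/2) = x * sqrt x"
  using powr_mult_base[of x "1/2"] by (simp add: powr_half_sqrt)

lemma cubic_lower_bound_attained:
  fixes \<delta> K \<sigma> :: real
  assumes "\<delta> \<ge> 0" "K \<ge> 0" "\<sigma> > 0"
  obtains a where "a \<ge> 0"
    "a * \<delta> - a\<^sup>2 / 2 * K - \<sigma> * a ^ 3 / 6
      \<ge> (1/2) * min (\<delta>\<^sup>2 / (1 + 3/2 * K)) (\<delta> powr (3/2) / (3 * sqrt \<sigma>))"
proof
  define a where "a = min (\<delta> / (1 + 3/2 * K)) (sqrt (\<delta> / \<sigma>))"
  show a0: "a \<ge> 0" unfolding a_def using assms by simp
  have "a * K \<le> \<delta> / (1 + 3/2 * K) * K"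
    unfolding a_def using assms(2) by (intro mult_right_mono) auto
  also have "\<dots> \<le> 2/3 * \<delta>" using assms by (simp add: field_simps)
  finally have aK: "a * K \<le> 2/3 * \<delta>" .
  have "a\<^sup>2 \<le> (sqrt (\<delta> / \<sigma>))\<^sup>2" using a0 unfolding a_def by (intro power_mono) auto
  then have "\<sigma> * a\<^sup>2 \<le> \<delta>" using assms by (simp add: field_simps)
  then have "a * K / 2 + \<sigma> * a\<^sup>2 / 6 \<le> \<delta> / 2" using aK by linarith
  then have "a * (\<delta> / 2) \<le> a * (\<delta> - (a * K / 2 + \<sigma> * a\<^sup>2 / 6))"
    using a0 by (intro mult_left_mono) auto
  also have "\<dots> = a * \<delta> - a\<^sup>2 / 2 * K - \<sigma> * a ^ 3 / 6"
    by (simp add: algebra_simps power2_eq_square power3_eq_cube)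
  finally have decrease: "a * \<delta> / 2 \<le> a * \<delta> - a\<^sup>2 / 2 * K - \<sigma> * a ^ 3 / 6" by simp
  have "\<delta> * sqrt (\<delta> / \<sigma>) = \<delta> powr (3/2) / sqrt \<sigma>"
    using assms by (simp add: powr_three_halves real_sqrt_divide)
  moreover have "a * \<delta> = min (\<delta> * (\<delta> / (1 + 3/2 * K))) (\<delta> * sqrt (\<delta> / \<sigma>))"
    unfolding a_def using assms(1) by (simp add: min_mult_distrib_left mult.commute)
  ultimately have "a * \<delta> = min (\<delta>\<^sup>2 / (1 + 3/2 * K)) (\<delta> powr (3/2) / sqrt \<sigma>)"
    by (simp add: power2_eq_square)
  moreover have "\<delta> powr (3/2) / (3 * sqrt \<sigma>) \<le> \<delta> powr (3/2) / sqrt \<sigma>"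
    using assms(3) by (simp add: divide_left_mono frac_le)
  ultimately show "a * \<delta> - a\<^sup>2 / 2 * K - \<sigma> * a ^ 3 / 6
      \<ge> (1/2) * min (\<delta>\<^sup>2 / (1 + 3/2 * K)) (\<delta> powr (3/2) / (3 * sqrt \<sigma>))"
    using decrease by linarith
qed

theorem lemma5p2:
  fixes N :: "real^'n \<Rightarrow> real"
    and f0 :: real and g :: "real^'n" and H :: "real^'n^'n" and \<sigma> :: real
    and s_k d_k :: "real^'n" and \<alpha>C :: real
  defines "m \<equiv> cubic_model N f0 g H \<sigma>"
  defines "g_k \<equiv> g + H *v s_k"
  assumes norm: "is_norm N"
    and sym: "transpose H = H"
    and sigma_pos: "\<sigma> > 0"
    and descent: "m s_k \<le> m 0"
    and gk_large: "dual_norm N g_k \<ge> (1/2) * \<sigma> * (N s_k)^2"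
    and d_unit: "N d_k = 1"
    and d_min: "\<And>v. N v = 1 \<Longrightarrow> g_k \<bullet> d_k \<le> g_k \<bullet> v"
    and alpha_nonneg: "\<alpha>C \<ge> 0"
    and alpha_min: "\<And>\<alpha>. \<alpha> \<ge> 0 \<Longrightarrow> m (s_k + \<alpha>C *\<^sub>R d_k) \<le> m (s_k + \<alpha> *\<^sub>R d_k)"
  shows "m s_k - m (s_k + \<alpha>C *\<^sub>R d_k) \<ge>
    (1/2) * min
      (\<bar>dual_norm N g_k - (1/2) * \<sigma> * (N s_k)^2\<bar>^2
         / (1 + (3/2) * (mat_norm2 N H + \<sigma> * N s_k)))
      (\<bar>dual_norm N g_k - (1/2) * \<sigma> * (N s_k)^2\<bar> powr (3/2)
         / (3 * sqrt \<sigma>))"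
proof -
  define \<delta> where "\<delta> = dual_norm N g_k - (1/2) * \<sigma> * (N s_k)^2"
  define K where "K = mat_norm2 N H + \<sigma> * N s_k"
  have "\<delta> \<ge> 0" unfolding \<delta>_def using gk_large by linarith
  have "mat_norm2 N H \<ge> 0"
    using abs_quadratic_form_le_mat_norm2[OF norm d_unit, of H] by (meson abs_ge_zero order_trans)
  then have "K \<ge> 0" unfolding K_def using sigma_pos is_norm_nonneg[OF norm, of s_k] by simp
  have dual_norm_gk: "dual_norm N g_k = - (g_k \<bullet> d_k)"
    by (rule dual_norm_eq_minimizer[OF norm d_unit d_min])
  have decrease: "m s_k - m (s_k + \<alpha> *\<^sub>R d_k) \<ge> \<alpha> * \<delta> - \<alpha>\<^sup>2 / 2 * K - \<sigma> * \<alpha> ^ 3 / 6"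
    if "\<alpha> \<ge> 0" for \<alpha>
    using cubic_model_decrease_ge[OF norm sym less_imp_le[OF sigma_pos] d_unit that,
        where c = f0 and g = g and s = s_k]
    unfolding m_def \<delta>_def K_def dual_norm_gk unfolding g_k_def by simp
  obtain a where "a \<ge> 0" and bound:
    "a * \<delta> - a\<^sup>2 / 2 * K - \<sigma> * a ^ 3 / 6
      \<ge> (1/2) * min (\<delta>\<^sup>2 / (1 + 3/2 * K)) (\<delta> powr (3/2) / (3 * sqrt \<sigma>))"
    using cubic_lower_bound_attained[OF \<open>\<delta> \<ge> 0\<close> \<open>K \<ge> 0\<close> sigma_pos] .
  then have "m s_k - m (s_k + \<alpha>C *\<^sub>R d_k)
      \<ge> (1/2) * min (\<delta>\<^sup>2 / (1 + 3/2 * K)) (\<delta> powr (3/2) / (3 * sqrt \<sigma>))"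
    using decrease[OF \<open>a \<ge> 0\<close>] alpha_min[OF \<open>a \<ge> 0\<close>] by linarith
  then show ?thesis using \<open>\<delta> \<ge> 0\<close> unfolding \<delta>_def K_def by simp
qed

end
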